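(* Let $\mathcal{X}$ be a Polish space, $F\colon\mathcal{X}\to\mathbb{R}_+$ measurable, and let $\mathcal{M}_+^F(\mathcal{X})$ be the set of $\sigma$-finite positive measures $\mu$ on $\mathcal{X}$ with $\mu(F^{-1}(0))=0$ and $\mu(\{x:F(x)>\varepsilon\})<\infty$ for all $\varepsilon>0$. Let $\mathcal{Q}\colon\mathcal{X}\to\mathcal{M}_+^F(\mathcal{X})$ be measurable and assume there is $c<1$ such that $\int F(y)\,\mathcal{Q}(x,dy)\le cF(x)$ for every $x\in\mathcal{X}$. For $x\in\mathcal{X}$ let $\mu^{[n]}_x=\sum_{\ell=0}^n\mu^\ell_x$ be the recursive Poisson point process of depth $n$ with kernel $\mathcal{Q}$ started at $x$. Then for every $x\in\mathcal{X}$ there exists a random $\sigma$-finite measure $\mu^{[\infty]}_x$ on $\mathcal{X}$ such that $$\lim_{n\to\infty}\mathbf{E}\int F(y)\,\bigl(\mu^{[\infty]}_x-\mu^{[n]}_x\bigr)(dy)=0.$$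
   Context: Recursive Poisson point process: set $\mu^0_x=\delta_x$ and, for $n\ge1$, let $\mu^n_x$ be, conditionally on $\mu^0_x,\dots,\mu^{n-1}_x$, a Poisson point process (random integer-valued $\sigma$-finite measure) on $\mathcal{X}$ with intensity measure $\int_{\mathcal{X}}\mathcal{Q}(y,\cdot)\,\mu^{n-1}_x(dy)$; then $\mu^{[n]}_x=\sum_{\ell=0}^n\mu^\ell_x$. *)

theory Defs
  imports "HOL-Probability.Probability"
begin

text \<open>Poisson probability of the value m for parameter lam in [0,\<infinity>];
  a Poisson variable of parameter \<infinity> equals \<infinity> a.s., so every finite value has probability 0.\<close>
definition poisson_prob :: "ennreal \<Rightarrow> nat \<Rightarrow> ennreal" where
  "poisson_prob lam m =
     (if lam = \<top> then 0
      else ennreal (exp (- enn2real lam) * enn2real lam ^ m / fact m))"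

definition random_measure :: "'w measure \<Rightarrow> ('w \<Rightarrow> 'a::topological_space measure) \<Rightarrow> bool" where
  "random_measure M N \<longleftrightarrow>
     (\<forall>w\<in>space M. sets (N w) = sets borel) \<and>
     (\<forall>A\<in>sets borel. (\<lambda>w. emeasure (N w) A) \<in> borel_measurable M)"

text \<open>Conditionally on the events in G, N is a Poisson point process (random integer-valued
  sigma-finite measure) with random intensity measure Lam (given by its values on Borel sets):
  for disjoint Borel sets A_0..A_{k-1}, naturals m_i and B in G,
  P(B \<inter> {N(A_i) = m_i for all i}) = E[1_B * prod_i Poisson(Lam(A_i))(m_i)].\<close>
definition cond_poisson_pp ::
  "'w measure \<Rightarrow> 'w set set \<Rightarrow> ('w \<Rightarrow> 'a::topological_space measure) \<Rightarrow> ('w \<Rightarrow> 'a set \<Rightarrow> ennreal) \<Rightarrow> bool" where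
  "cond_poisson_pp M G N Lam \<longleftrightarrow>
     random_measure M N \<and>
     (\<forall>w\<in>space M. sigma_finite_measure (N w) \<and>
        (\<forall>A\<in>sets borel. emeasure (N w) A \<in> range of_nat \<union> {\<top>})) \<and>
     (\<forall>(k::nat) (As::nat \<Rightarrow> 'a set) (ms::nat \<Rightarrow> nat) B.
        B \<in> G \<longrightarrow> (\<forall>i<k. As i \<in> sets borel) \<longrightarrow> disjoint_family_on As {..<k} \<longrightarrow>
        emeasure M (B \<inter> {w\<in>space M. \<forall>i<k. emeasure (N w) (As i) = of_nat (ms i)}) =
        (\<integral>\<^sup>+ w. indicator B w * (\<Prod>i<k. poisson_prob (Lam w (As i)) (ms i)) \<partial>M))"

definition hist_sigma :: "'w measure \<Rightarrow> (nat \<Rightarrow> 'w \<Rightarrow> 'a::topological_space measure) \<Rightarrow> nat \<Rightarrow> 'w set set" where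
  "hist_sigma M \<mu> n = sigma_sets (space M)
     {(\<lambda>w. emeasure (\<mu> l w) A) -` S \<inter> space M | l A S. l < n \<and> A \<in> sets borel \<and> S \<in> sets borel}"

definition recursive_ppp ::
  "'w measure \<Rightarrow> ('a::topological_space \<Rightarrow> 'a measure) \<Rightarrow> 'a \<Rightarrow> (nat \<Rightarrow> 'w \<Rightarrow> 'a measure) \<Rightarrow> bool" where
  "recursive_ppp M Q x \<mu> \<longleftrightarrow>
     (\<forall>w\<in>space M. \<mu> 0 w = return borel x) \<and>
     (\<forall>n. cond_poisson_pp M (hist_sigma M \<mu> (Suc n)) (\<mu> (Suc n))
            (\<lambda>w A. \<integral>\<^sup>+ y. emeasure (Q y) A \<partial>(\<mu> n w)))"

definition MF :: "('a::topological_space \<Rightarrow> real) \<Rightarrow> 'a measure set" where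
  "MF F = {m. sets m = sets borel \<and> sigma_finite_measure m \<and>
              emeasure m (F -` {0}) = 0 \<and>
              (\<forall>e>0. emeasure m {y. F y > e} < \<top>)}"

end

theory Submission
  imports Defs
begin

text \<open>Conditionally on the past, a Poisson point process has its intensity as mean measure, so
  E \<integral> g d\<mu>^(n+1) \<le> E \<integral>\<integral> g dQ(y) d\<mu>^n(y); for g = F the contraction hypothesis gives
  E \<integral> F d\<mu>^n \<le> c^n F(x). Hence \<Sum>_n \<mu>^n has finite mean F-mass and its tails \<Sum>_{l>n} \<mu>^l
  have F-mass tending to 0 in mean. The sum is a.s. \<sigma>-finite: it charges F^-1(0) only through
  the initial atom \<delta>_x, since Q is null there, and it gives finite mass to every set {F > \<epsilon>}.\<close>

lemma random_measureD:
  assumes "random_measure M N"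
  shows "\<And>w. w \<in> space M \<Longrightarrow> sets (N w) = sets borel"
    and "\<And>A. A \<in> sets borel \<Longrightarrow> (\<lambda>w. emeasure (N w) A) \<in> borel_measurable M"
  using assms unfolding random_measure_def by auto

lemma random_measure_measurable:
  assumes "random_measure M N" "w \<in> space M" "g \<in> borel_measurable borel"
  shows "g \<in> borel_measurable (N w)"
  by (subst measurable_cong_sets[OF random_measureD(1)[OF assms(1,2)] refl]) (rule assms(3))

lemma borel_measurable_nn_integral_random_measure:
  assumes N: "random_measure M N" and g: "g \<in> borel_measurable borel"
  shows "(\<lambda>w. \<integral>\<^sup>+y. g y \<partial>N w) \<in> borel_measurable M"
  using g
proof (induction rule: borel_measurable_induct)
  case (cong f g)
  then show ?case by (simp add: fun_eq_iff)
next
  case (set A)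
  then show ?case
    by (subst measurable_cong[where g="\<lambda>w. emeasure (N w) A"])
       (auto simp: random_measureD[OF N])
next
  case (mult u c)
  then show ?case
    by (subst measurable_cong[where g="\<lambda>w. c * \<integral>\<^sup>+y. u y \<partial>N w"])
       (auto simp: random_measureD[OF N] random_measure_measurable[OF N] intro!: nn_integral_cmult)
next
  case (add u v)
  then show ?case
    by (subst measurable_cong[where g="\<lambda>w. (\<integral>\<^sup>+y. v y \<partial>N w) + \<integral>\<^sup>+y. u y \<partial>N w"])
       (auto simp: random_measureD[OF N] random_measure_measurable[OF N] intro!: nn_integral_add)
next
  case (seq U)
  have eq: "(\<integral>\<^sup>+y. (SUP i. U i) y \<partial>N w) = (SUP i. \<integral>\<^sup>+y. U i y \<partial>N w)" if "w \<in> space M" for w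
  proof -
    have "\<And>i. U i \<in> borel_measurable (N w)"
      using N that seq(1) by (rule random_measure_measurable)
    with \<open>incseq U\<close> show ?thesis
      unfolding SUP_apply by (rule nn_integral_monotone_convergence_SUP)
  qed
  show ?case
    by (subst measurable_cong[OF eq]) (use seq in \<open>auto intro: borel_measurable_SUP\<close>)
qed

lemma random_measure_cong_sets:
  assumes "sets M = sets M'"
  shows "random_measure M N \<longleftrightarrow> random_measure M' N"
  unfolding random_measure_def sets_eq_imp_space_eq[OF assms] measurable_cong_sets[OF assms refl] ..

text \<open>The mean measure A \<mapsto> E N(A) of a random measure N; over the counting measure on \<nat> it
  is the sum of a sequence of measures.\<close>
definition mixture :: "'w measure \<Rightarrow> ('w \<Rightarrow> 'a::topological_space measure) \<Rightarrow> 'a measure" where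
  "mixture M N = measure_of UNIV (sets borel) (\<lambda>A. \<integral>\<^sup>+w. emeasure (N w) A \<partial>M)"

lemma sigma_algebra_borel: "sigma_algebra UNIV (sets borel)"
  using sets.sigma_algebra_axioms[of borel] by simp

lemma sets_mixture [simp, measurable_cong]: "sets (mixture M N) = sets borel"
  unfolding mixture_def by (simp add: sigma_algebra.sigma_sets_eq[OF sigma_algebra_borel])

lemma emeasure_mixture:
  fixes N :: "'w \<Rightarrow> 'a::topological_space measure"
  assumes N: "random_measure M N" and A: "A \<in> sets borel"
  shows "emeasure (mixture M N) A = (\<integral>\<^sup>+w. emeasure (N w) A \<partial>M)"
  unfolding mixture_def
proof (rule emeasure_measure_of_sigma[OF sigma_algebra_borel _ _ A])
  show "positive (sets borel) (\<lambda>A. \<integral>\<^sup>+w. emeasure (N w) A \<partial>M)"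
    by (simp add: positive_def)
  show "countably_additive (sets borel) (\<lambda>A. \<integral>\<^sup>+w. emeasure (N w) A \<partial>M)"
  proof (rule countably_additiveI)
    fix B :: "nat \<Rightarrow> 'a set"
    assume B: "range B \<subseteq> sets borel" "disjoint_family B"
    have "(\<Sum>i. \<integral>\<^sup>+w. emeasure (N w) (B i) \<partial>M) = (\<integral>\<^sup>+w. (\<Sum>i. emeasure (N w) (B i)) \<partial>M)"
      using B by (intro nn_integral_suminf[symmetric] random_measureD(2)[OF N]) auto
    also have "\<dots> = (\<integral>\<^sup>+w. emeasure (N w) (\<Union>i. B i) \<partial>M)"
      using B by (intro nn_integral_cong suminf_emeasure) (simp_all add: random_measureD(1)[OF N])
    finally show "(\<Sum>i. \<integral>\<^sup>+w. emeasure (N w) (B i) \<partial>M) = \<integral>\<^sup>+w. emeasure (N w) (\<Union>i. B i) \<partial>M" .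
  qed
qed

lemma nn_integral_mixture:
  assumes N: "random_measure M N" and g: "g \<in> borel_measurable borel"
  shows "(\<integral>\<^sup>+y. g y \<partial>mixture M N) = (\<integral>\<^sup>+w. \<integral>\<^sup>+y. g y \<partial>N w \<partial>M)"
  using g
proof (induction rule: borel_measurable_induct)
  case (cong f g)
  then show ?case by (simp add: fun_eq_iff)
next
  case (set A)
  then show ?case
    by (auto simp: emeasure_mixture[OF N] random_measureD[OF N] intro!: nn_integral_cong)
next
  case (mult u c)
  have "(\<integral>\<^sup>+y. c * u y \<partial>mixture M N) = c * (\<integral>\<^sup>+w. \<integral>\<^sup>+y. u y \<partial>N w \<partial>M)"
    using mult by (subst nn_integral_cmult) (simp_all add: measurable_cong_sets[OF sets_mixture])
  also have "\<dots> = (\<integral>\<^sup>+w. c * \<integral>\<^sup>+y. u y \<partial>N w \<partial>M)"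
    using mult by (intro nn_integral_cmult[symmetric] borel_measurable_nn_integral_random_measure[OF N])
  also have "\<dots> = (\<integral>\<^sup>+w. \<integral>\<^sup>+y. c * u y \<partial>N w \<partial>M)"
    using mult by (intro nn_integral_cong nn_integral_cmult[symmetric] random_measure_measurable[OF N])
  finally show ?case .
next
  case (add u v)
  have "(\<integral>\<^sup>+y. v y + u y \<partial>mixture M N) =
      (\<integral>\<^sup>+w. \<integral>\<^sup>+y. v y \<partial>N w \<partial>M) + (\<integral>\<^sup>+w. \<integral>\<^sup>+y. u y \<partial>N w \<partial>M)"
    using add by (subst nn_integral_add) (simp_all add: measurable_cong_sets[OF sets_mixture])
  also have "\<dots> = (\<integral>\<^sup>+w. (\<integral>\<^sup>+y. v y \<partial>N w) + (\<integral>\<^sup>+y. u y \<partial>N w) \<partial>M)"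
    using add by (intro nn_integral_add[symmetric] borel_measurable_nn_integral_random_measure[OF N])
  also have "\<dots> = (\<integral>\<^sup>+w. \<integral>\<^sup>+y. v y + u y \<partial>N w \<partial>M)"
    using add by (intro nn_integral_cong nn_integral_add[symmetric] random_measure_measurable[OF N])
  finally show ?case .
next
  case (seq U)
  have "(\<integral>\<^sup>+y. (SUP i. U i) y \<partial>mixture M N) = (SUP i. \<integral>\<^sup>+y. U i y \<partial>mixture M N)"
    unfolding SUP_apply using seq
    by (intro nn_integral_monotone_convergence_SUP) (simp_all add: measurable_cong_sets[OF sets_mixture])
  also have "\<dots> = (SUP i. \<integral>\<^sup>+w. \<integral>\<^sup>+y. U i y \<partial>N w \<partial>M)"
    using seq by simp
  also have "\<dots> = (\<integral>\<^sup>+w. (SUP i. \<integral>\<^sup>+y. U i y \<partial>N w) \<partial>M)"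
    using seq by (intro nn_integral_monotone_convergence_SUP[symmetric]
        borel_measurable_nn_integral_random_measure[OF N])
      (auto simp: incseq_def le_fun_def intro!: nn_integral_mono)
  also have "\<dots> = (\<integral>\<^sup>+w. \<integral>\<^sup>+y. (SUP i. U i) y \<partial>N w \<partial>M)"
    unfolding SUP_apply using seq
    by (intro nn_integral_cong nn_integral_monotone_convergence_SUP[symmetric]
        random_measure_measurable[OF N]) auto
  finally show ?case .
qed

definition measure_suminf :: "(nat \<Rightarrow> 'a::topological_space measure) \<Rightarrow> 'a measure" where
  "measure_suminf N = mixture (count_space UNIV) N"

lemma random_measure_count_space:
  "random_measure (count_space UNIV) N \<longleftrightarrow> (\<forall>l. sets (N l) = sets borel)"
  by (simp add: random_measure_def)

lemma sets_measure_suminf [simp, measurable_cong]: "sets (measure_suminf N) = sets borel"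
  by (simp add: measure_suminf_def)

lemma emeasure_measure_suminf:
  assumes "\<And>l. sets (N l) = sets borel" "A \<in> sets borel"
  shows "emeasure (measure_suminf N) A = (\<Sum>l. emeasure (N l) A)"
  using assms by (simp add: measure_suminf_def emeasure_mixture random_measure_count_space
      nn_integral_count_space_nat)

lemma nn_integral_measure_suminf:
  assumes "\<And>l. sets (N l) = sets borel" "g \<in> borel_measurable borel"
  shows "(\<integral>\<^sup>+y. g y \<partial>measure_suminf N) = (\<Sum>l. \<integral>\<^sup>+y. g y \<partial>N l)"
  using assms by (simp add: measure_suminf_def nn_integral_mixture random_measure_count_space
      nn_integral_count_space_nat)

lemma random_measure_measure_suminf:
  fixes N :: "nat \<Rightarrow> 'w \<Rightarrow> 'a::topological_space measure"
  assumes "\<And>l. random_measure M (N l)"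
  shows "random_measure M (\<lambda>w. measure_suminf (\<lambda>l. N l w))"
  unfolding random_measure_def
proof (intro conjI ballI)
  fix A :: "'a set" assume A: "A \<in> sets borel"
  have "(\<lambda>w. \<Sum>l. emeasure (N l w) A) \<in> borel_measurable M"
    using A assms by (intro borel_measurable_suminf_order random_measureD(2))
  then show "(\<lambda>w. emeasure (measure_suminf (\<lambda>l. N l w)) A) \<in> borel_measurable M"
    by (subst measurable_cong[OF emeasure_measure_suminf])
       (simp_all add: A random_measureD(1)[OF assms])
qed simp

lemma poisson_sums:
  fixes l :: real assumes l: "l \<ge> 0"
  shows "(\<lambda>m. exp (- l) * l ^ m / fact m) sums 1"
    and "(\<lambda>m. real m * (exp (- l) * l ^ m / fact m)) sums l"
proof -
  have "(\<lambda>m. exp (- l) * (l ^ m / fact m)) sums (exp (- l) * exp l)"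
    using exp_converges[of l] by (intro sums_mult) (simp add: divide_inverse mult.commute)
  then show s1: "(\<lambda>m. exp (- l) * l ^ m / fact m) sums 1"
    by (simp add: exp_minus field_simps)
  have "(\<lambda>m. real (Suc m) * (exp (- l) * l ^ Suc m / fact (Suc m))) =
      (\<lambda>m. l * (exp (- l) * l ^ m / fact m))"
    by (simp add: fun_eq_iff field_simps del: of_nat_Suc)
  with sums_mult[OF s1, of l] have "(\<lambda>m. real (Suc m) * (exp (- l) * l ^ Suc m / fact (Suc m))) sums l"
    by simp
  then show "(\<lambda>m. real m * (exp (- l) * l ^ m / fact m)) sums l"
    using sums_Suc_iff[of "\<lambda>m. real m * (exp (- l) * l ^ m / fact m)" l] by simp
qed

lemma poisson_prob_sums:
  assumes L: "L \<noteq> \<top>"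
  shows "(\<Sum>m. poisson_prob L m) = 1"
    and "(\<Sum>m. of_nat m * poisson_prob L m) = L"
proof -
  define l where "l = enn2real L"
  have l0: "l \<ge> 0" and Ll: "L = ennreal l" using L by (auto simp: l_def ennreal_enn2real_if)
  have pp: "poisson_prob L m = ennreal (exp (- l) * l ^ m / fact m)" for m
    using L by (simp add: poisson_prob_def l_def)
  show "(\<Sum>m. poisson_prob L m) = 1"
    unfolding pp using poisson_sums(1)[OF l0] l0 by (subst suminf_ennreal2) (auto simp: sums_iff)
  have eq: "of_nat m * poisson_prob L m = ennreal (real m * (exp (- l) * l ^ m / fact m))" for m
    unfolding pp ennreal_mult'[of "real m", OF of_nat_0_le_iff] ennreal_of_nat_eq_real_of_nat ..
  show "(\<Sum>m. of_nat m * poisson_prob L m) = L"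
    unfolding eq using poisson_sums(2)[OF l0] l0 Ll by (subst suminf_ennreal2) (auto simp: sums_iff)
qed

lemma borel_measurable_poisson_prob [measurable]:
  assumes [measurable]: "f \<in> borel_measurable M"
  shows "(\<lambda>w. poisson_prob (f w) m) \<in> borel_measurable M"
  unfolding poisson_prob_def by measurable

lemma mixture_mono:
  assumes N: "random_measure M N" and N': "random_measure M N'"
    and le: "\<And>A. A \<in> sets borel \<Longrightarrow> (\<integral>\<^sup>+w. emeasure (N w) A \<partial>M) \<le> (\<integral>\<^sup>+w. emeasure (N' w) A \<partial>M)"
  shows "mixture M N \<le> mixture M N'"
proof -
  have "emeasure (mixture M N) A \<le> emeasure (mixture M N') A" for A
    by (cases "A \<in> sets borel") (simp_all add: emeasure_mixture[OF N] emeasure_mixture[OF N'] le emeasure_notin_sets)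
  then show ?thesis
    by (simp add: le_measure_iff le_fun_def sets_eq_imp_space_eq[of "mixture M N" "mixture M N'"])
qed

lemma cond_poisson_pp_random_measure: "cond_poisson_pp M G N Lam \<Longrightarrow> random_measure M N"
  by (simp add: cond_poisson_pp_def)

lemma cond_poisson_pp_emeasure_count:
  assumes P: "cond_poisson_pp M G N Lam" and G: "space M \<in> G" and A: "A \<in> sets borel"
  shows "emeasure M {w\<in>space M. emeasure (N w) A = of_nat m} = (\<integral>\<^sup>+w. poisson_prob (Lam w A) m \<partial>M)"
proof -
  have "emeasure M (space M \<inter> {w\<in>space M. emeasure (N w) A = of_nat m}) =
      (\<integral>\<^sup>+w. indicator (space M) w * poisson_prob (Lam w A) m \<partial>M)"
    using P G A unfolding cond_poisson_pp_def
    by (auto dest!: spec[of _ 1] spec[of _ "\<lambda>_. A"] spec[of _ "\<lambda>_. m"] spec[of _ "space M"]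
        simp: disjoint_family_on_def)
  also have "space M \<inter> {w\<in>space M. emeasure (N w) A = of_nat m} = {w\<in>space M. emeasure (N w) A = of_nat m}"
    by blast
  also have "(\<integral>\<^sup>+w. indicator (space M) w * poisson_prob (Lam w A) m \<partial>M) =
      (\<integral>\<^sup>+w. poisson_prob (Lam w A) m \<partial>M)"
    by (rule nn_integral_cong) simp
  finally show ?thesis .
qed

lemma (in prob_space) nn_integral_eq_suminf_nat_values:
  assumes X[measurable]: "X \<in> borel_measurable M"
    and total: "(\<Sum>m. emeasure M {w\<in>space M. X w = of_nat m}) = 1"
  shows "(\<integral>\<^sup>+w. X w \<partial>M) = (\<Sum>m. of_nat m * emeasure M {w\<in>space M. X w = of_nat m})"
proof -
  define S where "S m = {w\<in>space M. X w = of_nat m}" for m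
  have S[measurable]: "S m \<in> sets M" for m
    unfolding S_def by measurable
  have "disjoint_family S"
    by (auto simp: disjoint_family_on_def S_def)
  moreover have "{w\<in>space M. \<exists>m. w \<in> S m} = (\<Union>m. S m)"
    by (auto simp: S_def)
  ultimately have "emeasure M {w\<in>space M. \<exists>m. w \<in> S m} = 1"
    using total suminf_emeasure[of S M] by (simp add: S_def[symmetric] image_subset_iff)
  then have "AE w in M. \<exists>m. w \<in> S m"
    by (subst AE_iff_emeasure_eq_1) auto
  then have "AE w in M. X w = (\<Sum>m. of_nat m * indicator (S m) w)"
  proof eventually_elim
    case (elim w)
    then obtain k where k: "w \<in> S k" by blast
    have "(\<Sum>m. of_nat m * indicator (S m) w) = (\<Sum>m\<in>{k}. of_nat m * indicator (S m) w :: ennreal)"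
      by (rule suminf_finite) (use k in \<open>auto simp: S_def\<close>)
    with k show ?case by (simp add: S_def)
  qed
  then have "(\<integral>\<^sup>+w. X w \<partial>M) = (\<Sum>m. \<integral>\<^sup>+w. of_nat m * indicator (S m) w \<partial>M)"
    by (simp add: nn_integral_cong_AE nn_integral_suminf)
  then show ?thesis
    by (simp add: nn_integral_cmult_indicator S_def)
qed

lemma cond_poisson_pp_mean_le:
  assumes "prob_space M" and P: "cond_poisson_pp M G N Lam" and G: "space M \<in> G"
    and A: "A \<in> sets borel" and Lam[measurable]: "(\<lambda>w. Lam w A) \<in> borel_measurable M"
  shows "(\<integral>\<^sup>+w. emeasure (N w) A \<partial>M) \<le> (\<integral>\<^sup>+w. Lam w A \<partial>M)"
proof (cases "AE w in M. Lam w A \<noteq> \<top>")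
  case False
  then have "(\<integral>\<^sup>+w. Lam w A \<partial>M) = \<top>"
    using nn_integral_PInf_AE[OF Lam] by (auto simp: infinity_ennreal_def)
  then show ?thesis by simp
next
  case True
  interpret prob_space M by fact
  have [measurable]: "(\<lambda>w. emeasure (N w) A) \<in> borel_measurable M"
    using A cond_poisson_pp_random_measure[OF P] by (rule random_measureD(2)[rotated])
  note count = cond_poisson_pp_emeasure_count[OF P G A]
  have "(\<Sum>m. emeasure M {w\<in>space M. emeasure (N w) A = of_nat m}) =
      (\<integral>\<^sup>+w. (\<Sum>m. poisson_prob (Lam w A) m) \<partial>M)"
    by (simp add: count nn_integral_suminf)
  also have "\<dots> = 1"
    using True by (subst nn_integral_cong_AE[where v="\<lambda>_. 1"]) (auto simp: poisson_prob_sums emeasure_space_1)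
  finally have "(\<integral>\<^sup>+w. emeasure (N w) A \<partial>M) =
      (\<Sum>m. \<integral>\<^sup>+w. of_nat m * poisson_prob (Lam w A) m \<partial>M)"
    by (simp add: nn_integral_eq_suminf_nat_values count nn_integral_cmult)
  also have "\<dots> = (\<integral>\<^sup>+w. Lam w A \<partial>M)"
    using True by (subst nn_integral_suminf[symmetric]) (auto intro!: nn_integral_cong_AE simp: poisson_prob_sums)
  finally show ?thesis by simp
qed

lemma cond_poisson_pp_nn_integral_le:
  fixes Q :: "'a::topological_space \<Rightarrow> 'a measure"
  assumes M: "prob_space M"
    and P: "cond_poisson_pp M G N (\<lambda>w A. \<integral>\<^sup>+y. emeasure (Q y) A \<partial>K w)"
    and G: "space M \<in> G" and K: "random_measure M K" and Q: "random_measure borel Q"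
    and g: "g \<in> borel_measurable borel"
  shows "(\<integral>\<^sup>+w. \<integral>\<^sup>+y. g y \<partial>N w \<partial>M) \<le> (\<integral>\<^sup>+w. \<integral>\<^sup>+y. \<integral>\<^sup>+z. g z \<partial>Q y \<partial>K w \<partial>M)"
proof -
  have N: "random_measure M N"
    by (rule cond_poisson_pp_random_measure[OF P])
  have QK: "random_measure (K w) Q" if "w \<in> space M" for w
    by (subst random_measure_cong_sets[OF random_measureD(1)[OF K that]]) (rule Q)
  have Qmeas: "(\<lambda>w. \<integral>\<^sup>+y. emeasure (Q y) A \<partial>K w) \<in> borel_measurable M" if "A \<in> sets borel" for A
    using K random_measureD(2)[OF Q that] by (rule borel_measurable_nn_integral_random_measure)
  have KQ: "random_measure M (\<lambda>w. mixture (K w) Q)"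
    unfolding random_measure_def
  proof (intro conjI ballI)
    fix A :: "'a set" assume A: "A \<in> sets borel"
    show "(\<lambda>w. emeasure (mixture (K w) Q) A) \<in> borel_measurable M"
      by (subst measurable_cong[OF emeasure_mixture[OF QK A]]) (simp_all add: Qmeas A)
  qed simp
  have "(\<integral>\<^sup>+w. \<integral>\<^sup>+y. g y \<partial>N w \<partial>M) = (\<integral>\<^sup>+y. g y \<partial>mixture M N)"
    by (rule nn_integral_mixture[OF N g, symmetric])
  also have "\<dots> \<le> (\<integral>\<^sup>+y. g y \<partial>mixture M (\<lambda>w. mixture (K w) Q))"
  proof (intro nn_integral_mono_measure mixture_mono[OF N KQ])
    fix A :: "'a set" assume A: "A \<in> sets borel"
    have "(\<integral>\<^sup>+w. emeasure (N w) A \<partial>M) \<le> (\<integral>\<^sup>+w. \<integral>\<^sup>+y. emeasure (Q y) A \<partial>K w \<partial>M)"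
      by (rule cond_poisson_pp_mean_le[OF M P G A Qmeas[OF A]])
    also have "\<dots> = (\<integral>\<^sup>+w. emeasure (mixture (K w) Q) A \<partial>M)"
      by (intro nn_integral_cong) (simp add: emeasure_mixture[OF QK] A)
    finally show "(\<integral>\<^sup>+w. emeasure (N w) A \<partial>M) \<le> (\<integral>\<^sup>+w. emeasure (mixture (K w) Q) A \<partial>M)" .
  qed simp
  also have "\<dots> = (\<integral>\<^sup>+w. \<integral>\<^sup>+y. g y \<partial>mixture (K w) Q \<partial>M)"
    by (rule nn_integral_mixture[OF KQ g])
  also have "\<dots> = (\<integral>\<^sup>+w. \<integral>\<^sup>+y. \<integral>\<^sup>+z. g z \<partial>Q y \<partial>K w \<partial>M)"
    by (intro nn_integral_cong nn_integral_mixture[OF QK g])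
  finally show ?thesis .
qed

lemma ennreal_suminf_tail_tendsto_zero:
  fixes f :: "nat \<Rightarrow> ennreal"
  assumes "suminf f \<noteq> \<top>"
  shows "(\<lambda>n. \<Sum>l. f (l + n)) \<longlonglongrightarrow> 0"
proof -
  have fin: "f l \<noteq> \<top>" for l
    using assms ennreal_suminf_lessD[of f \<top> l] by (simp add: top.not_eq_extremum)
  define g where "g l = enn2real (f l)" for l
  have f: "f = (\<lambda>l. ennreal (g l))"
    using fin by (simp add: g_def fun_eq_iff ennreal_enn2real_if)
  have "summable g"
  proof (rule summable_suminf_not_top)
    show "0 \<le> g l" for l
      by (simp add: g_def)
    show "(\<Sum>l. ennreal (g l)) \<noteq> \<top>"
      using assms by (simp add: f)
  qed
  have "(\<lambda>n. ennreal (\<Sum>l. g (l + n))) \<longlonglongrightarrow> ennreal 0"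
    using suminf_exist_split2[OF \<open>summable g\<close>] by (rule tendsto_ennrealI)
  moreover have "(\<Sum>l. f (l + n)) = ennreal (\<Sum>l. g (l + n))" for n
    unfolding f
    by (rule suminf_ennreal2[OF _ summable_ignore_initial_segment[OF \<open>summable g\<close>]]) (simp add: g_def)
  ultimately show ?thesis by simp
qed

lemma sigma_finite_measure_nn_integral_finite:
  fixes m :: "'a::topological_space measure" and F :: "'a \<Rightarrow> real"
  assumes sets: "sets m = sets borel" and F[measurable]: "F \<in> borel_measurable borel"
    and F_nonneg: "\<And>y. F y \<ge> 0"
    and null: "emeasure m (F -` {0}) \<noteq> \<top>"
    and finite: "(\<integral>\<^sup>+y. ennreal (F y) \<partial>m) \<noteq> \<top>"
  shows "sigma_finite_measure m"
proof -
  define B where "B k = {y. F y > inverse (real (Suc k))}" for k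
  have B[measurable]: "B k \<in> sets borel" for k
    unfolding B_def by measurable
  have "emeasure m (B k) \<noteq> \<top>" for k
  proof -
    have "ennreal (inverse (real (Suc k))) * emeasure m (B k) = (\<integral>\<^sup>+y. ennreal (inverse (real (Suc k))) * indicator (B k) y \<partial>m)"
      using sets by (simp add: nn_integral_cmult_indicator)
    also have "\<dots> \<le> (\<integral>\<^sup>+y. ennreal (F y) \<partial>m)"
      by (intro nn_integral_mono) (auto simp: B_def split: split_indicator intro!: ennreal_leI)
    finally show ?thesis
      using finite by (auto simp: ennreal_mult_eq_top_iff top_unique)
  qed
  moreover have "F -` {0} \<union> (\<Union>k. B k) = UNIV"
  proof (intro set_eqI iffI UNIV_I)
    fix y :: 'a
    show "y \<in> F -` {0} \<union> (\<Union>k. B k)"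
    proof (cases "F y = 0")
      case False
      then have "F y > 0" using F_nonneg[of y] by simp
      then obtain k where "inverse (real (Suc k)) < F y" using reals_Archimedean by blast
      then show ?thesis by (auto simp: B_def)
    qed simp
  qed
  ultimately show ?thesis
    unfolding sigma_finite_measure_def using null sets
    by (intro exI[of _ "insert (F -` {0}) (range B)"])
       (auto simp: sets_eq_imp_space_eq[OF sets] measurable_sets_borel[OF F])
qed

lemma emeasure_measure_suminf_split:
  assumes "\<And>l. sets (N l) = sets borel" "A \<in> sets borel"
  shows "emeasure (measure_suminf N) A =
    (\<Sum>l\<le>n. emeasure (N l) A) + emeasure (measure_suminf (\<lambda>l. N (l + Suc n))) A"
  using assms suminf_offset[of "\<lambda>l. emeasure (N l) A" "Suc n"]
  by (simp add: emeasure_measure_suminf lessThan_Suc_atMost add.commute)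

lemma random_measure_if_null:
  fixes N :: "'w \<Rightarrow> 'a::topological_space measure"
  assumes N: "random_measure M N" and G[measurable]: "G \<in> sets M"
  shows "random_measure M (\<lambda>w. if w \<in> G then N w else null_measure borel)"
  unfolding random_measure_def
proof (intro conjI ballI)
  fix A :: "'a set" assume A: "A \<in> sets borel"
  have "(\<lambda>w. if w \<in> G then emeasure (N w) A else 0) \<in> borel_measurable M"
    using random_measureD(2)[OF N A] by measurable
  then show "(\<lambda>w. emeasure (if w \<in> G then N w else null_measure borel) A) \<in> borel_measurable M"
    by (rule measurable_cong[THEN iffD1, rotated]) simp
qed (simp add: random_measureD(1)[OF N])

lemma AE_suminf_nn_integral_finite:
  assumes \<mu>: "\<And>l. random_measure M (\<mu> l)" and g: "g \<in> borel_measurable borel"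
    and mean: "(\<Sum>l. \<integral>\<^sup>+w. \<integral>\<^sup>+y. g y \<partial>\<mu> l w \<partial>M) \<noteq> \<top>"
  shows "AE w in M. (\<Sum>l. \<integral>\<^sup>+y. g y \<partial>\<mu> l w) \<noteq> \<top>"
proof -
  have [measurable]: "(\<lambda>w. \<integral>\<^sup>+y. g y \<partial>\<mu> l w) \<in> borel_measurable M" for l
    using \<mu> g by (rule borel_measurable_nn_integral_random_measure)
  have "(\<integral>\<^sup>+w. (\<Sum>l. \<integral>\<^sup>+y. g y \<partial>\<mu> l w) \<partial>M) \<noteq> \<top>"
    using mean by (simp add: nn_integral_suminf)
  then show ?thesis
    by (intro nn_integral_PInf_AE[unfolded infinity_ennreal_def]) measurable
qed

lemma nn_integral_measure_suminf_tail_tendsto_zero: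
  assumes \<mu>: "\<And>l. random_measure M (\<mu> l)" and g: "g \<in> borel_measurable borel"
    and mean: "(\<Sum>l. \<integral>\<^sup>+w. \<integral>\<^sup>+y. g y \<partial>\<mu> l w \<partial>M) \<noteq> \<top>"
  shows "(\<lambda>n. \<integral>\<^sup>+w. \<integral>\<^sup>+y. g y \<partial>measure_suminf (\<lambda>l. \<mu> (l + Suc n) w) \<partial>M) \<longlonglongrightarrow> 0"
proof -
  have "(\<integral>\<^sup>+w. \<integral>\<^sup>+y. g y \<partial>measure_suminf (\<lambda>l. \<mu> (l + Suc n) w) \<partial>M) =
      (\<Sum>l. \<integral>\<^sup>+w. \<integral>\<^sup>+y. g y \<partial>\<mu> (l + Suc n) w \<partial>M)" for n
  proof -
    have "(\<integral>\<^sup>+w. \<integral>\<^sup>+y. g y \<partial>measure_suminf (\<lambda>l. \<mu> (l + Suc n) w) \<partial>M) =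
        (\<integral>\<^sup>+w. (\<Sum>l. \<integral>\<^sup>+y. g y \<partial>\<mu> (l + Suc n) w) \<partial>M)"
      using g by (intro nn_integral_cong nn_integral_measure_suminf random_measureD(1)[OF \<mu>])
    also have "\<dots> = (\<Sum>l. \<integral>\<^sup>+w. \<integral>\<^sup>+y. g y \<partial>\<mu> (l + Suc n) w \<partial>M)"
      using \<mu> g by (intro nn_integral_suminf borel_measurable_nn_integral_random_measure)
    finally show ?thesis .
  qed
  then show ?thesis
    using LIMSEQ_Suc[OF ennreal_suminf_tail_tendsto_zero[OF mean]] by simp
qed

lemma random_measure_series_decomposition:
  fixes \<mu> :: "nat \<Rightarrow> 'w \<Rightarrow> 'a::topological_space measure" and F :: "'a \<Rightarrow> real"
  assumes \<mu>: "\<And>l. random_measure M (\<mu> l)"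
    and F[measurable]: "F \<in> borel_measurable borel" and F_nonneg: "\<And>y. F y \<ge> 0"
    and mean: "(\<Sum>l. \<integral>\<^sup>+w. \<integral>\<^sup>+y. ennreal (F y) \<partial>\<mu> l w \<partial>M) \<noteq> \<top>"
    and null: "AE w in M. (\<Sum>l. emeasure (\<mu> l w) (F -` {0})) \<noteq> \<top>"
  shows "\<exists>\<mu>inf \<nu>. random_measure M \<mu>inf \<and>
           (\<forall>w\<in>space M. sigma_finite_measure (\<mu>inf w)) \<and>
           (\<forall>n. random_measure M (\<nu> n)) \<and>
           (\<forall>n. AE w in M. \<forall>A\<in>sets borel.
              emeasure (\<mu>inf w) A = (\<Sum>l\<le>n. emeasure (\<mu> l w) A) + emeasure (\<nu> n w) A) \<and>
           (\<lambda>n. \<integral>\<^sup>+ w. (\<integral>\<^sup>+ y. ennreal (F y) \<partial>(\<nu> n w)) \<partial>M) \<longlonglongrightarrow> 0"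
proof -
  have F_zero: "F -` {0} \<in> sets borel"
    by (rule measurable_sets_borel[OF F]) simp
  have sets_\<mu>: "\<And>w l. w \<in> space M \<Longrightarrow> sets (\<mu> l w) = sets borel"
    using \<mu> by (rule random_measureD)
  have Fm: "(\<lambda>y. ennreal (F y)) \<in> borel_measurable borel"
    by measurable
  have [measurable]: "(\<lambda>w. \<integral>\<^sup>+y. ennreal (F y) \<partial>\<mu> l w) \<in> borel_measurable M" for l
    using \<mu> Fm by (rule borel_measurable_nn_integral_random_measure)
  have [measurable]: "(\<lambda>w. emeasure (\<mu> l w) (F -` {0})) \<in> borel_measurable M" for l
    using \<mu> F_zero by (rule random_measureD)
  define good where "good = {w\<in>space M. (\<Sum>l. \<integral>\<^sup>+y. ennreal (F y) \<partial>\<mu> l w) \<noteq> \<top> \<and>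
      (\<Sum>l. emeasure (\<mu> l w) (F -` {0})) \<noteq> \<top>}"
  have good: "good \<in> sets M"
    unfolding good_def by measurable
  have AE_good: "AE w in M. w \<in> good"
    using AE_suminf_nn_integral_finite[OF \<mu> Fm mean] null AE_space
    by eventually_elim (auto simp: good_def)
  \<comment> \<open>Off the almost sure set \<open>good\<close> the sum need not be \<sigma>-finite, so it is replaced by 0 there.\<close>
  define \<mu>inf where "\<mu>inf w = (if w \<in> good then measure_suminf (\<lambda>l. \<mu> l w) else null_measure borel)" for w
  have sigma_finite: "sigma_finite_measure (\<mu>inf w)" if "w \<in> space M" for w
  proof (rule sigma_finite_measure_nn_integral_finite[OF _ F F_nonneg])
    show "sets (\<mu>inf w) = sets borel"
      by (simp add: \<mu>inf_def)
    show "emeasure (\<mu>inf w) (F -` {0}) \<noteq> \<top>" "(\<integral>\<^sup>+y. ennreal (F y) \<partial>\<mu>inf w) \<noteq> \<top>"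
      using that F_zero by (simp_all add: \<mu>inf_def emeasure_measure_suminf nn_integral_measure_suminf
          sets_\<mu> good_def)
  qed
  have decomposition: "AE w in M. \<forall>A\<in>sets borel. emeasure (\<mu>inf w) A =
      (\<Sum>l\<le>n. emeasure (\<mu> l w) A) + emeasure (measure_suminf (\<lambda>l. \<mu> (l + Suc n) w)) A" for n
    using AE_good
  proof eventually_elim
    case (elim w)
    then have "w \<in> space M"
      by (simp add: good_def)
    with elim show ?case
      using emeasure_measure_suminf_split[of "\<lambda>l. \<mu> l w", OF sets_\<mu>] by (simp add: \<mu>inf_def)
  qed
  have "random_measure M \<mu>inf"
    unfolding \<mu>inf_def by (intro random_measure_if_null random_measure_measure_suminf \<mu> good)
  then show ?thesis
    by (intro exI[of _ \<mu>inf] exI[of _ "\<lambda>n w. measure_suminf (\<lambda>l. \<mu> (l + Suc n) w)"] conjI allI ballI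
        random_measure_measure_suminf \<mu> sigma_finite decomposition
        nn_integral_measure_suminf_tail_tendsto_zero[OF \<mu> Fm mean])
qed

lemma recursive_ppp_random_measure:
  assumes "recursive_ppp M Q x \<mu>"
  shows "random_measure M (\<mu> l)"
proof (cases l)
  case 0
  have "(\<lambda>w. emeasure (\<mu> 0 w) A) \<in> borel_measurable M" if "A \<in> sets borel" for A
    using assms that
    by (subst measurable_cong[where g="\<lambda>_. indicator A x"]) (simp_all add: recursive_ppp_def)
  with 0 assms show ?thesis
    by (simp add: random_measure_def recursive_ppp_def)
next
  case (Suc n)
  with assms show ?thesis
    by (auto simp: recursive_ppp_def intro: cond_poisson_pp_random_measure)
qed

lemma recursive_ppp_nn_integral_le:
  assumes "prob_space M" and R: "recursive_ppp M Q x \<mu>" and Q: "random_measure borel Q"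
    and g: "g \<in> borel_measurable borel"
  shows "(\<integral>\<^sup>+w. \<integral>\<^sup>+y. g y \<partial>\<mu> (Suc l) w \<partial>M) \<le> (\<integral>\<^sup>+w. \<integral>\<^sup>+y. \<integral>\<^sup>+z. g z \<partial>Q y \<partial>\<mu> l w \<partial>M)"
proof (rule cond_poisson_pp_nn_integral_le[OF assms(1) _ _ _ Q g])
  show "cond_poisson_pp M (hist_sigma M \<mu> (Suc l)) (\<mu> (Suc l)) (\<lambda>w A. \<integral>\<^sup>+y. emeasure (Q y) A \<partial>\<mu> l w)"
    using R by (simp add: recursive_ppp_def)
  show "space M \<in> hist_sigma M \<mu> (Suc l)"
    unfolding hist_sigma_def by (rule sigma_sets_top)
  show "random_measure M (\<mu> l)"
    using R by (rule recursive_ppp_random_measure)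
qed

lemma recursive_ppp_mean_le_geometric:
  fixes F :: "'a::topological_space \<Rightarrow> real"
  assumes M: "prob_space M" and R: "recursive_ppp M Q x \<mu>" and Q: "random_measure borel Q"
    and F[measurable]: "F \<in> borel_measurable borel" and F_nonneg: "\<And>y. F y \<ge> 0"
    and c: "c \<ge> 0" and contr: "\<And>y. (\<integral>\<^sup>+z. ennreal (F z) \<partial>Q y) \<le> ennreal (c * F y)"
  shows "(\<integral>\<^sup>+w. \<integral>\<^sup>+y. ennreal (F y) \<partial>\<mu> l w \<partial>M) \<le> ennreal (c ^ l * F x)"
proof (induction l)
  case 0
  interpret prob_space M by fact
  have "(\<integral>\<^sup>+w. \<integral>\<^sup>+y. ennreal (F y) \<partial>\<mu> 0 w \<partial>M) = (\<integral>\<^sup>+w. ennreal (F x) \<partial>M)"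
    using R by (intro nn_integral_cong) (simp add: recursive_ppp_def nn_integral_return)
  then show ?case
    by (simp add: emeasure_space_1)
next
  case (Suc l)
  have "(\<integral>\<^sup>+w. \<integral>\<^sup>+y. ennreal (F y) \<partial>\<mu> (Suc l) w \<partial>M) \<le>
      (\<integral>\<^sup>+w. \<integral>\<^sup>+y. \<integral>\<^sup>+z. ennreal (F z) \<partial>Q y \<partial>\<mu> l w \<partial>M)"
    using M R Q by (rule recursive_ppp_nn_integral_le) simp
  also have "\<dots> \<le> (\<integral>\<^sup>+w. \<integral>\<^sup>+y. ennreal c * ennreal (F y) \<partial>\<mu> l w \<partial>M)"
    using contr c F_nonneg by (intro nn_integral_mono) (metis ennreal_mult)
  also have "\<dots> = (\<integral>\<^sup>+w. ennreal c * \<integral>\<^sup>+y. ennreal (F y) \<partial>\<mu> l w \<partial>M)"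
    by (intro nn_integral_cong nn_integral_cmult
        random_measure_measurable[OF recursive_ppp_random_measure[OF R]]) simp_all
  also have "\<dots> = ennreal c * (\<integral>\<^sup>+w. \<integral>\<^sup>+y. ennreal (F y) \<partial>\<mu> l w \<partial>M)"
    by (intro nn_integral_cmult borel_measurable_nn_integral_random_measure[OF recursive_ppp_random_measure[OF R]]) simp
  also have "\<dots> \<le> ennreal c * ennreal (c ^ l * F x)"
    using Suc by (rule mult_left_mono) simp
  also have "\<dots> = ennreal (c ^ Suc l * F x)"
    using c by (simp add: ennreal_mult'[symmetric] mult.assoc)
  finally show ?case .
qed

lemma recursive_ppp_AE_suminf_null_le_1:
  assumes M: "prob_space M" and R: "recursive_ppp M Q x \<mu>" and Q: "random_measure borel Q"
    and Z: "Z \<in> sets borel" and null: "\<And>y. emeasure (Q y) Z = 0"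
  shows "AE w in M. (\<Sum>l. emeasure (\<mu> l w) Z) \<le> 1"
proof -
  have sets_\<mu>: "\<And>w l. w \<in> space M \<Longrightarrow> sets (\<mu> l w) = sets borel"
    using recursive_ppp_random_measure[OF R] by (rule random_measureD)
  have "AE w in M. emeasure (\<mu> (Suc l) w) Z = 0" for l
  proof -
    have "(\<integral>\<^sup>+w. \<integral>\<^sup>+y. indicator Z y \<partial>\<mu> (Suc l) w \<partial>M) \<le> (\<integral>\<^sup>+w. \<integral>\<^sup>+y. \<integral>\<^sup>+z. indicator Z z \<partial>Q y \<partial>\<mu> l w \<partial>M)"
      using M R Q borel_measurable_indicator[OF Z] by (rule recursive_ppp_nn_integral_le)
    also have "\<dots> = 0"
      using Z null random_measureD(1)[OF Q] by simp
    finally have "(\<integral>\<^sup>+w. emeasure (\<mu> (Suc l) w) Z \<partial>M) = 0"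
      using Z sets_\<mu> by (simp cong: nn_integral_cong)
    then show ?thesis
      using random_measureD(2)[OF recursive_ppp_random_measure[OF R] Z] by (simp add: nn_integral_0_iff_AE)
  qed
  then have "AE w in M. \<forall>l. emeasure (\<mu> (Suc l) w) Z = 0"
    by (simp add: AE_all_countable)
  then show ?thesis
    using AE_space
  proof eventually_elim
    case (elim w)
    have "(\<Sum>l. emeasure (\<mu> l w) Z) = (\<Sum>l\<in>{0}. emeasure (\<mu> l w) Z)"
      by (rule suminf_finite) (use elim in \<open>auto simp: neq0_conv dest!: gr0_implies_Suc\<close>)
    also have "\<dots> = indicator Z x"
      using R elim Z by (simp add: recursive_ppp_def)
    finally show ?case
      by (simp split: split_indicator)
  qed
qed

lemma recursive_ppp_suminf_mean_le:
  fixes F :: "'a::topological_space \<Rightarrow> real"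
  assumes M: "prob_space M" and R: "recursive_ppp M Q x \<mu>" and Q: "random_measure borel Q"
    and F: "F \<in> borel_measurable borel" and F_nonneg: "\<And>y. F y \<ge> 0"
    and c: "0 \<le> c" "c < 1" and contr: "\<And>y. (\<integral>\<^sup>+z. ennreal (F z) \<partial>Q y) \<le> ennreal (c * F y)"
  shows "(\<Sum>l. \<integral>\<^sup>+w. \<integral>\<^sup>+y. ennreal (F y) \<partial>\<mu> l w \<partial>M) \<le> ennreal (F x / (1 - c))"
proof -
  have "(\<lambda>l. c ^ l * F x) sums (F x / (1 - c))"
    using sums_mult2[OF geometric_sums, of c "F x"] c by (simp add: field_simps)
  then have "(\<lambda>l. ennreal (c ^ l * F x)) sums ennreal (F x / (1 - c))"
    using c F_nonneg[of x] by (simp add: sums_ennreal)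
  then have "(\<Sum>l. ennreal (c ^ l * F x)) = ennreal (F x / (1 - c))"
    by (rule sums_unique[symmetric])
  moreover have "(\<Sum>l. \<integral>\<^sup>+w. \<integral>\<^sup>+y. ennreal (F y) \<partial>\<mu> l w \<partial>M) \<le> (\<Sum>l. ennreal (c ^ l * F x))"
    using recursive_ppp_mean_le_geometric[OF M R Q F F_nonneg c(1) contr] by (intro suminf_le) auto
  ultimately show ?thesis by simp
qed

lemma recursive_ppp_series_decomposition:
  fixes F :: "'a::topological_space \<Rightarrow> real"
  assumes M: "prob_space M" and R: "recursive_ppp M Q x \<mu>" and Q: "random_measure borel Q"
    and F: "F \<in> borel_measurable borel" and F_nonneg: "\<And>y. F y \<ge> 0"
    and Q_null: "\<And>y. emeasure (Q y) (F -` {0}) = 0"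
    and c: "0 \<le> c" "c < 1" and contr: "\<And>y. (\<integral>\<^sup>+z. ennreal (F z) \<partial>Q y) \<le> ennreal (c * F y)"
  shows "\<exists>\<mu>inf \<nu>. random_measure M \<mu>inf \<and>
           (\<forall>w\<in>space M. sigma_finite_measure (\<mu>inf w)) \<and>
           (\<forall>n. random_measure M (\<nu> n)) \<and>
           (\<forall>n. AE w in M. \<forall>A\<in>sets borel.
              emeasure (\<mu>inf w) A = (\<Sum>l\<le>n. emeasure (\<mu> l w) A) + emeasure (\<nu> n w) A) \<and>
           (\<lambda>n. \<integral>\<^sup>+ w. (\<integral>\<^sup>+ y. ennreal (F y) \<partial>(\<nu> n w)) \<partial>M) \<longlonglongrightarrow> 0"
proof -
  have "(\<Sum>l. \<integral>\<^sup>+w. \<integral>\<^sup>+y. ennreal (F y) \<partial>\<mu> l w \<partial>M) \<le> ennreal (F x / (1 - c))"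
    by (rule recursive_ppp_suminf_mean_le[OF M R Q F F_nonneg c contr])
  then have mean: "(\<Sum>l. \<integral>\<^sup>+w. \<integral>\<^sup>+y. ennreal (F y) \<partial>\<mu> l w \<partial>M) \<noteq> \<top>"
    by (rule neq_top_trans[OF ennreal_neq_top])
  have "F -` {0} \<in> sets borel"
    by (rule measurable_sets_borel[OF F]) simp
  then have "AE w in M. (\<Sum>l. emeasure (\<mu> l w) (F -` {0})) \<le> 1"
    using Q_null by (rule recursive_ppp_AE_suminf_null_le_1[OF M R Q])
  then have null: "AE w in M. (\<Sum>l. emeasure (\<mu> l w) (F -` {0})) \<noteq> \<top>"
    by eventually_elim (auto simp: top_unique)
  show ?thesis
    using recursive_ppp_random_measure[OF R] F F_nonneg mean null
    by (rule random_measure_series_decomposition)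
qed

theorem lemma2p7:
  fixes F :: "'a::polish_space \<Rightarrow> real"
    and Q :: "'a \<Rightarrow> 'a measure"
    and c :: real
  assumes F_meas: "F \<in> borel_measurable borel"
    and F_nonneg: "\<And>x. F x \<ge> 0"
    and Q_MF: "\<And>x. Q x \<in> MF F"
    and Q_meas: "\<And>A. A \<in> sets borel \<Longrightarrow> (\<lambda>x. emeasure (Q x) A) \<in> borel_measurable borel"
    and c_lt: "c < 1"
    and contr: "\<And>x. (\<integral>\<^sup>+ y. ennreal (F y) \<partial>Q x) \<le> ennreal (c * F x)"
  shows "\<forall>x. \<forall>(M::'w measure) (\<mu>::nat \<Rightarrow> 'w \<Rightarrow> 'a measure).
           prob_space M \<longrightarrow> recursive_ppp M Q x \<mu> \<longrightarrow>
           (\<exists>\<mu>inf \<nu>. random_measure M \<mu>inf \<and>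
              (\<forall>w\<in>space M. sigma_finite_measure (\<mu>inf w)) \<and>
              (\<forall>n. random_measure M (\<nu> n)) \<and>
              (\<forall>n. AE w in M. \<forall>A\<in>sets borel.
                   emeasure (\<mu>inf w) A = (\<Sum>l\<le>n. emeasure (\<mu> l w) A) + emeasure (\<nu> n w) A) \<and>
              (\<lambda>n. \<integral>\<^sup>+ w. (\<integral>\<^sup>+ y. ennreal (F y) \<partial>(\<nu> n w)) \<partial>M) \<longlonglongrightarrow> 0)"
proof -
  have Q: "random_measure borel Q"
    using Q_MF Q_meas by (simp add: random_measure_def MF_def)
  have contr': "(\<integral>\<^sup>+z. ennreal (F z) \<partial>Q y) \<le> ennreal (max c 0 * F y)" for y
  proof -
    have "c * F y \<le> max c 0 * F y"
      using F_nonneg[of y] by (intro mult_right_mono) simp_all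
    then show ?thesis
      using contr[of y] by (metis ennreal_leI order_trans)
  qed
  show ?thesis
    using Q_MF c_lt
    by (intro allI impI recursive_ppp_series_decomposition[OF _ _ Q F_meas F_nonneg _ _ _ contr'])
      (simp_all add: MF_def)
qed

end
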